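(* Let $k\le l$ be positive integers with $\gcd(k,l)=1$, let $n\ge1$, $m\ge 0$ be integers, write $m=qn+r$ with integers $q\ge 0$, $0\le r<n$, and let $A\in\mathcal D^{k,l}(m,n)$. Let $W$ be a submatrix of $A$ (on a set of rows $I$ and set of columns $J$) all of whose entries are at most $q$, with $|I|+|J|$ as large as possible among all such submatrices. After permuting rows and columns write $$A=\begin{pmatrix}X&Y\\ Z&W\end{pmatrix},$$ where $X$ has size $t_1\times t_2$ (so $t_1=nk-|I|$, $t_2=nl-|J|$), $Y$ has size $t_1\times |J|$ and $Z$ has size $|I|\times t_2$. If $t_1+t_2\le nk$, then $${\rm tdet}(A)\ge \min\bigl(nk(q+1),\ {\rm tdet}(Y)+{\rm tdet}(Z)+(nk-t_1-t_2)q\bigr).$$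
   Context: $\mathcal D^{k,l}(m,n)$ denotes the set of all $nk\times nl$ matrices with nonnegative integer entries all of whose row sums equal $ml$ and all of whose column sums equal $mk$. For an $s\times t$ matrix $A=(a_{ij})$ with $s\le t$, a transversal of $A$ is a set of entries $T=\{a_{1i_1},\dots,a_{si_s}\}$ with $i_1,\dots,i_s\in\{1,\dots,t\}$ pairwise distinct, and $|T|=a_{1i_1}+\cdots+a_{si_s}$; if $s>t$, the transversals of $A$ are those of its transpose. The tropical determinant is ${\rm tdet}(A)=\max_T|T|$ over all transversals $T$ of $A$; a matrix with no rows or no columns has tropical determinant $0$. The tropical determinant is invariant under row and column permutations. *)

theory Defs
  imports Main
begin

text \<open>Matrices are functions nat => nat => nat; a (sub)matrix is given by a
finite set of row indices R and column indices C.\<close>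

definition inD :: "nat \<Rightarrow> nat \<Rightarrow> nat \<Rightarrow> nat \<Rightarrow> (nat \<Rightarrow> nat \<Rightarrow> nat) \<Rightarrow> bool" where
  "inD k l m n A \<longleftrightarrow>
     (\<forall>i < n*k. (\<Sum>j<n*l. A i j) = m*l) \<and> (\<forall>j < n*l. (\<Sum>i<n*k. A i j) = m*k)"

definition tdet :: "(nat \<Rightarrow> nat \<Rightarrow> nat) \<Rightarrow> nat set \<Rightarrow> nat set \<Rightarrow> nat" where
  "tdet A R C =
     (if card R \<le> card C
      then Max {\<Sum>i\<in>R. A i (f i) | f. f ` R \<subseteq> C \<and> inj_on f R}
      else Max {\<Sum>j\<in>C. A (g j) j | g. g ` C \<subseteq> R \<and> inj_on g C})"

end

theory Submission imports Defs begin

text \<open>Subtract \<open>q\<close> from every entry. Since \<open>q n \<le> m\<close>, the shifted matrix \<open>E\<close> has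
nonnegative row and column sums and no more rows than columns. Under these conditions a partial
transversal of \<open>E\<close>-weight \<open>s\<close> can be grown one row at a time to a full one of weight at least
\<open>min (n k) s\<close>: either a free row meets a free column in a nonnegative entry, or all those entries
are at most \<open>-1\<close>; then the free rows and columns carry large weight on the used part, and on
average one swap through a used cell gains enough. Starting from the union of optimal transversals
of \<open>Y\<close> and \<open>Z\<close> and adding back \<open>n k q\<close> gives the bound. The maximality of \<open>I\<close>, \<open>J\<close>, the
bound on the entries of \<open>W\<close> and the coprimality of \<open>k\<close> and \<open>l\<close> are not needed.\<close>

definition partial_transversal :: "'a set \<Rightarrow> 'b set \<Rightarrow> 'a set \<Rightarrow> ('a \<Rightarrow> 'b) \<Rightarrow> bool" where
  "partial_transversal Rows Cols R f \<longleftrightarrow> R \<subseteq> Rows \<and> f ` R \<subseteq> Cols \<and> inj_on f R"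

lemma partial_transversal_insert:
  assumes pt: "partial_transversal Rows Cols R f" and i: "i \<in> Rows - R"
    and j: "j \<in> Cols - f ` R" and "finite R"
  shows "partial_transversal Rows Cols (insert i R) (f(i := j))"
    and "(\<Sum>r\<in>insert i R. E r ((f(i := j)) r)) = E i j + (\<Sum>r\<in>R. E r (f r))"
proof -
  show "partial_transversal Rows Cols (insert i R) (f(i := j))"
    using pt i j by (auto simp: partial_transversal_def inj_on_def)
  have "(\<Sum>r\<in>R. E r ((f(i := j)) r)) = (\<Sum>r\<in>R. E r (f r))"
    using i by (intro sum.cong) auto
  then show "(\<Sum>r\<in>insert i R. E r ((f(i := j)) r)) = E i j + (\<Sum>r\<in>R. E r (f r))"
    using \<open>finite R\<close> i by simp
qed

lemma partial_transversal_swap: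
  fixes E :: "'a \<Rightarrow> 'b \<Rightarrow> 'c::ab_group_add"
  assumes pt: "partial_transversal Rows Cols R f" and i: "i \<in> Rows - R" and p: "p \<in> R"
    and j: "j \<in> Cols - f ` R" and "finite R"
  shows "partial_transversal Rows Cols (insert i R) (f(i := f p, p := j))"
    and "(\<Sum>r\<in>insert i R. E r ((f(i := f p, p := j)) r))
           = (\<Sum>r\<in>R. E r (f r)) + (E i (f p) + E p j - E p (f p))"
proof -
  let ?f' = "f(i := f p, p := j)"
  have ip: "i \<noteq> p" using i p by auto
  show "partial_transversal Rows Cols (insert i R) ?f'"
    using pt i p j ip unfolding partial_transversal_def inj_on_def by auto
  have "(\<Sum>r\<in>R - {p}. E r (?f' r)) = (\<Sum>r\<in>R - {p}. E r (f r))"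
    using i by (intro sum.cong) auto
  moreover have "(\<Sum>r\<in>R. E r (g r)) = E p (g p) + (\<Sum>r\<in>R - {p}. E r (g r))" for g
    using \<open>finite R\<close> p by (simp add: sum.remove)
  ultimately show "(\<Sum>r\<in>insert i R. E r (?f' r))
           = (\<Sum>r\<in>R. E r (f r)) + (E i (f p) + E p j - E p (f p))"
    using \<open>finite R\<close> i ip by (simp add: algebra_simps)
qed

lemma sum_ge_card_of_negative_complement:
  fixes h :: "'a \<Rightarrow> int"
  assumes "finite U" "C \<subseteq> U" "0 \<le> sum h U" "\<forall>x\<in>U - C. h x \<le> -1"
  shows "int (card (U - C)) \<le> sum h C"
proof -
  have "sum h U = sum h C + sum h (U - C)"
    using assms(1,2) by (metis add.commute sum.subset_diff)
  moreover have "sum h (U - C) \<le> - int (card (U - C))"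
    using sum_mono[of "U - C" h "\<lambda>_. -1"] assms(4) by simp
  ultimately show ?thesis using assms(3) by linarith
qed

lemma exists_large_swap_gain:
  fixes a b c :: "'a \<Rightarrow> int"
  assumes "finite R" "card R < N" "N \<le> M"
    and a: "int (M - card R) \<le> sum a R" and b: "int (N - card R) \<le> sum b R"
  shows "\<exists>p\<in>R. min (int N) (sum c R) \<le> sum c R + (a p + b p - c p)"
proof (rule ccontr)
  define k s where "k = card R" and "s = sum c R"
  assume "\<not> ?thesis"
  then have "\<forall>p\<in>R. a p + b p - c p \<le> min (int N) s - 1 - s" by (force simp: s_def)
  then have "sum (\<lambda>p. a p + b p - c p) R \<le> int k * (min (int N) s - 1 - s)"
    using sum_mono[of R _ "\<lambda>_. min (int N) s - 1 - s"] by (simp add: k_def)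
  then have sum_bound: "int (N - k) + int (M - k) - s \<le> int k * (min (int N) s - 1 - s)"
    using a b by (simp add: sum.distrib sum_subtractf k_def s_def)
  have kN: "k < N" "k \<le> M" using assms(2,3) by (auto simp: k_def)
  show False
  proof (cases "s \<le> int N")
    case True
    then show False using sum_bound kN \<open>N \<le> M\<close> by (simp add: of_nat_diff)
  next
    case False
    have "k \<noteq> 0" using False by (auto simp: k_def s_def \<open>finite R\<close>)
    have "(int k - 1) * (int N + 1) \<le> (int k - 1) * s"
      using False \<open>k \<noteq> 0\<close> by (intro mult_left_mono) auto
    then show False
      using sum_bound False kN \<open>k \<noteq> 0\<close> \<open>N \<le> M\<close> by (simp add: of_nat_diff algebra_simps)
  qed
qed

lemma partial_transversal_augment:
  fixes E :: "'a \<Rightarrow> 'b \<Rightarrow> int"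
  assumes fin: "finite Rows" "finite Cols" and le: "card Rows \<le> card Cols"
    and rows: "\<forall>i\<in>Rows. 0 \<le> (\<Sum>j\<in>Cols. E i j)" and cols: "\<forall>j\<in>Cols. 0 \<le> (\<Sum>i\<in>Rows. E i j)"
    and pt: "partial_transversal Rows Cols R f" and lt: "card R < card Rows"
  shows "\<exists>R' f'. partial_transversal Rows Cols R' f' \<and> card R' = Suc (card R) \<and>
           min (int (card Rows)) (\<Sum>i\<in>R. E i (f i)) \<le> (\<Sum>i\<in>R'. E i (f' i))"
proof -
  have R_sub: "R \<subseteq> Rows" "f ` R \<subseteq> Cols" "inj_on f R" using pt by (auto simp: partial_transversal_def)
  have finR: "finite R" using R_sub(1) fin(1) finite_subset by blast
  have card_fR: "card (f ` R) = card R" using R_sub(3) by (rule card_image)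
  have card_free_rows: "card (Rows - R) = card Rows - card R"
    using R_sub(1) finR by (simp add: card_Diff_subset)
  have card_free_cols: "card (Cols - f ` R) = card Cols - card R"
    using R_sub(2) finR card_fR by (simp add: card_Diff_subset)
  have "card (Rows - R) \<noteq> 0" "card (Cols - f ` R) \<noteq> 0"
    using card_free_rows card_free_cols lt le by auto
  then have "Rows - R \<noteq> {}" "Cols - f ` R \<noteq> {}" by (metis card.empty)+
  then obtain i0 j0 where i0: "i0 \<in> Rows - R" and j0: "j0 \<in> Cols - f ` R" by blast
  consider (free) i j where "i \<in> Rows - R" "j \<in> Cols - f ` R" "0 \<le> E i j"
    | (negative) "\<forall>i\<in>Rows - R. \<forall>j\<in>Cols - f ` R. E i j \<le> -1"
    by force
  then show ?thesis
  proof cases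
    case free
    have "(\<Sum>r\<in>insert i R. E r ((f(i := j)) r)) = E i j + (\<Sum>r\<in>R. E r (f r))"
      by (rule partial_transversal_insert(2)[OF pt free(1,2) finR])
    then show ?thesis
      using partial_transversal_insert(1)[OF pt free(1,2) finR] free finR
      by (intro exI[of _ "insert i R"] exI[of _ "f(i := j)"]) auto
  next
    case negative
    have "int (card (Cols - f ` R)) \<le> (\<Sum>j\<in>f ` R. E i0 j)"
      using fin(2) R_sub(2) rows i0 negative by (intro sum_ge_card_of_negative_complement) auto
    then have a: "int (card Cols - card R) \<le> (\<Sum>p\<in>R. E i0 (f p))"
      using R_sub(3) card_free_cols by (simp add: sum.reindex)
    have b: "int (card Rows - card R) \<le> (\<Sum>p\<in>R. E p j0)"
      using sum_ge_card_of_negative_complement[of Rows R "\<lambda>i. E i j0"]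
        fin(1) R_sub(1) cols j0 negative card_free_rows by auto
    obtain p where p: "p \<in> R"
      and gain: "min (int (card Rows)) (\<Sum>i\<in>R. E i (f i))
                   \<le> (\<Sum>i\<in>R. E i (f i)) + (E i0 (f p) + E p j0 - E p (f p))"
      using exists_large_swap_gain[OF finR lt le a b, of "\<lambda>i. E i (f i)"] by blast
    have "(\<Sum>r\<in>insert i0 R. E r ((f(i0 := f p, p := j0)) r))
           = (\<Sum>r\<in>R. E r (f r)) + (E i0 (f p) + E p j0 - E p (f p))"
      by (rule partial_transversal_swap(2)[OF pt i0 p j0 finR])
    then show ?thesis
      using partial_transversal_swap(1)[OF pt i0 p j0 finR] gain i0 finR
      by (intro exI[of _ "insert i0 R"] exI[of _ "f(i0 := f p, p := j0)"]) auto
  qed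
qed

lemma partial_transversal_extend:
  fixes E :: "'a \<Rightarrow> 'b \<Rightarrow> int"
  assumes fin: "finite Rows" "finite Cols" and le: "card Rows \<le> card Cols"
    and rows: "\<forall>i\<in>Rows. 0 \<le> (\<Sum>j\<in>Cols. E i j)" and cols: "\<forall>j\<in>Cols. 0 \<le> (\<Sum>i\<in>Rows. E i j)"
    and pt: "partial_transversal Rows Cols R f"
  shows "\<exists>g. partial_transversal Rows Cols Rows g \<and>
           min (int (card Rows)) (\<Sum>i\<in>R. E i (f i)) \<le> (\<Sum>i\<in>Rows. E i (g i))"
  using pt
proof (induction "card Rows - card R" arbitrary: R f rule: less_induct)
  case less
  have R_sub: "R \<subseteq> Rows" using less.prems by (simp add: partial_transversal_def)
  show ?case
  proof (cases "card R < card Rows")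
    case True
    obtain R' f' where R': "partial_transversal Rows Cols R' f'" "card R' = Suc (card R)"
      and step: "min (int (card Rows)) (\<Sum>i\<in>R. E i (f i)) \<le> (\<Sum>i\<in>R'. E i (f' i))"
      using partial_transversal_augment[OF fin le rows cols less.prems True] by blast
    obtain g where "partial_transversal Rows Cols Rows g"
      and "min (int (card Rows)) (\<Sum>i\<in>R'. E i (f' i)) \<le> (\<Sum>i\<in>Rows. E i (g i))"
      using less.hyps[OF _ R'(1)] R'(2) True by (auto simp: diff_less_mono2)
    then show ?thesis using step by auto
  next
    case False
    then have "R = Rows" using R_sub fin(1) by (meson card_seteq not_le)
    then show ?thesis using less.prems by auto
  qed
qed

lemma partial_transversal_Un:
  assumes pt1: "partial_transversal Rows Cols R1 f1" and pt2: "partial_transversal Rows Cols R2 f2"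
    and disj: "R1 \<inter> R2 = {}" "f1 ` R1 \<inter> f2 ` R2 = {}" and fin: "finite R1" "finite R2"
  defines "f \<equiv> \<lambda>i. if i \<in> R1 then f1 i else f2 i"
  shows "partial_transversal Rows Cols (R1 \<union> R2) f"
    and "(\<Sum>i\<in>R1 \<union> R2. E i (f i)) = (\<Sum>i\<in>R1. E i (f1 i)) + (\<Sum>i\<in>R2. E i (f2 i))"
proof -
  have "inj_on f R1" "inj_on f R2" "f ` R1 = f1 ` R1" "f ` R2 = f2 ` R2"
    using pt1 pt2 disj(1) by (auto simp: f_def partial_transversal_def inj_on_def)
  moreover have "R1 - R2 = R1" "R2 - R1 = R2" using disj(1) by auto
  ultimately show "partial_transversal Rows Cols (R1 \<union> R2) f"
    using pt1 pt2 disj(2) by (simp add: partial_transversal_def inj_on_Un image_Un)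
  have "(\<Sum>i\<in>R2. E i (f i)) = (\<Sum>i\<in>R2. E i (f2 i))"
    using disj(1) by (intro sum.cong) (auto simp: f_def)
  then show "(\<Sum>i\<in>R1 \<union> R2. E i (f i)) = (\<Sum>i\<in>R1. E i (f1 i)) + (\<Sum>i\<in>R2. E i (f2 i))"
    using fin disj(1) by (simp add: sum.union_disjoint f_def)
qed

lemma finite_transversal_weights:
  fixes A :: "'a \<Rightarrow> 'b \<Rightarrow> nat"
  assumes "finite R" "finite C"
  shows "finite {\<Sum>i\<in>R. A i (f i) | f. f ` R \<subseteq> C \<and> inj_on f R}"
proof (rule finite_subset)
  show "{\<Sum>i\<in>R. A i (f i) | f. f ` R \<subseteq> C \<and> inj_on f R} \<subseteq> {..\<Sum>i\<in>R. \<Sum>j\<in>C. A i j}"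
    using assms by (force intro: sum_mono member_le_sum)
qed simp

lemma max_transversal_weight_attained:
  fixes A :: "'a \<Rightarrow> 'b \<Rightarrow> nat"
  assumes "finite R" "finite C" "card R \<le> card C"
  shows "\<exists>f. f ` R \<subseteq> C \<and> inj_on f R \<and>
           (\<Sum>i\<in>R. A i (f i)) = Max {\<Sum>i\<in>R. A i (f i) | f. f ` R \<subseteq> C \<and> inj_on f R}"
proof -
  let ?S = "{\<Sum>i\<in>R. A i (f i) | f. f ` R \<subseteq> C \<and> inj_on f R}"
  have "?S \<noteq> {}" using card_le_inj[OF assms] by blast
  then have "Max ?S \<in> ?S" using finite_transversal_weights[OF assms(1,2)] by (rule Max_in[rotated])
  then obtain f where "f ` R \<subseteq> C" "inj_on f R" "Max ?S = (\<Sum>i\<in>R. A i (f i))" by blast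
  then show ?thesis by metis
qed

lemma tdet_attained:
  fixes A :: "nat \<Rightarrow> nat \<Rightarrow> nat"
  assumes "finite R" "finite C"
  shows "\<exists>R0 f. partial_transversal R C R0 f \<and> card R0 = min (card R) (card C) \<and>
           (\<Sum>i\<in>R0. A i (f i)) = tdet A R C"
proof (cases "card R \<le> card C")
  case True
  then show ?thesis
    using max_transversal_weight_attained[OF assms True, of A]
    by (auto simp: tdet_def partial_transversal_def)
next
  case False
  obtain g where g: "g ` C \<subseteq> R" "inj_on g C" "(\<Sum>j\<in>C. A (g j) j) = tdet A R C"
    using max_transversal_weight_attained[OF assms(2,1), of "\<lambda>j i. A i j"] False
    by (auto simp: tdet_def)
  have "(\<Sum>i\<in>g ` C. A i (inv_into C g i)) = (\<Sum>j\<in>C. A (g j) j)"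
    using g(2) by (simp add: sum.reindex)
  moreover have "partial_transversal R C (g ` C) (inv_into C g)"
    using g(1,2) by (auto simp: partial_transversal_def inj_on_inv_into)
  ultimately show ?thesis
    using g False by (intro exI[of _ "g ` C"] exI[of _ "inv_into C g"]) (simp add: card_image)
qed

lemma tdet_ge_transversal:
  fixes A :: "nat \<Rightarrow> nat \<Rightarrow> nat"
  assumes "finite R" "finite C" "card R \<le> card C" "partial_transversal R C R f"
  shows "(\<Sum>i\<in>R. A i (f i)) \<le> tdet A R C"
  using assms finite_transversal_weights[OF assms(1,2), of A]
  by (auto simp: tdet_def partial_transversal_def intro: Max_ge)

lemma tdet_ge_min_shifted:
  fixes A :: "nat \<Rightarrow> nat \<Rightarrow> nat"
  assumes fin: "finite Rows" "finite Cols" and le: "card Rows \<le> card Cols"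
    and rows: "\<forall>i\<in>Rows. q * card Cols \<le> (\<Sum>j\<in>Cols. A i j)"
    and cols: "\<forall>j\<in>Cols. q * card Rows \<le> (\<Sum>i\<in>Rows. A i j)"
    and pt: "partial_transversal Rows Cols R f"
  shows "min (card Rows * (q + 1)) ((\<Sum>i\<in>R. A i (f i)) + (card Rows - card R) * q)
           \<le> tdet A Rows Cols"
proof -
  define E where "E i j = int (A i j) - int q" for i j
  have weight_E: "(\<Sum>i\<in>S. E i (h i)) = int (\<Sum>i\<in>S. A i (h i)) - int (card S) * int q" for S h
    by (simp add: E_def sum_subtractf)
  have "\<forall>i\<in>Rows. 0 \<le> (\<Sum>j\<in>Cols. E i j)" and "\<forall>j\<in>Cols. 0 \<le> (\<Sum>i\<in>Rows. E i j)"
    using rows cols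
    by (auto simp: E_def sum_subtractf mult.commute[of q] simp flip: of_nat_mult of_nat_sum)
  from partial_transversal_extend[OF fin le this pt] obtain g
    where g: "partial_transversal Rows Cols Rows g"
      and extend: "min (int (card Rows)) (\<Sum>i\<in>R. E i (f i)) \<le> (\<Sum>i\<in>Rows. E i (g i))"
    by blast
  have card_R: "card R \<le> card Rows"
    using pt fin(1) by (auto simp: partial_transversal_def intro: card_mono)
  have "int (min (card Rows * (q + 1)) ((\<Sum>i\<in>R. A i (f i)) + (card Rows - card R) * q))
      = min (int (card Rows)) (\<Sum>i\<in>R. E i (f i)) + int (card Rows) * int q"
    unfolding weight_E min_add_distrib_left of_nat_min of_nat_add of_nat_mult of_nat_diff[OF card_R]
    by (simp add: algebra_simps)
  also have "\<dots> \<le> int (\<Sum>i\<in>Rows. A i (g i))"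
    using extend unfolding weight_E by simp
  also have "\<dots> \<le> int (tdet A Rows Cols)"
    using tdet_ge_transversal[OF fin le g, of A] by (simp flip: of_nat_sum)
  finally show ?thesis by simp
qed

lemma transversal_of_off_diagonal_blocks:
  fixes A :: "nat \<Rightarrow> nat \<Rightarrow> nat"
  assumes fin: "finite Rows" "finite Cols" and sub: "I \<subseteq> Rows" "J \<subseteq> Cols"
    and card_Y: "card (Rows - I) \<le> card J" and card_Z: "card (Cols - J) \<le> card I"
  shows "\<exists>R f. partial_transversal Rows Cols R f \<and>
           card R = card (Rows - I) + card (Cols - J) \<and>
           (\<Sum>i\<in>R. A i (f i)) = tdet A (Rows - I) J + tdet A I (Cols - J)"
proof -
  have finIJ: "finite I" "finite J" using fin sub finite_subset by auto
  obtain R1 f1 where Y: "partial_transversal (Rows - I) J R1 f1"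
      "card R1 = card (Rows - I)" "(\<Sum>i\<in>R1. A i (f1 i)) = tdet A (Rows - I) J"
    using tdet_attained[of "Rows - I" J A] fin finIJ card_Y by auto
  obtain R2 f2 where Z: "partial_transversal I (Cols - J) R2 f2"
      "card R2 = card (Cols - J)" "(\<Sum>i\<in>R2. A i (f2 i)) = tdet A I (Cols - J)"
    using tdet_attained[of I "Cols - J" A] fin finIJ card_Z by (auto simp: min_def)
  have in_whole: "partial_transversal Rows Cols R1 f1" "partial_transversal Rows Cols R2 f2"
    and fin_R: "finite R1" "finite R2"
    using Y(1) Z(1) sub fin finIJ by (auto simp: partial_transversal_def intro: finite_subset)
  have disj: "R1 \<inter> R2 = {}" "f1 ` R1 \<inter> f2 ` R2 = {}"
    using Y(1) Z(1) unfolding partial_transversal_def by blast+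
  show ?thesis
    using partial_transversal_Un(1)[OF in_whole disj fin_R]
      partial_transversal_Un(2)[OF in_whole disj fin_R, of A] Y(2,3) Z(2,3) disj(1) fin_R
    by (intro exI conjI) (auto simp: card_Un_disjoint)
qed

lemma inD_line_sums_ge:
  assumes "inD k l m n A" "q * n \<le> m"
  shows "\<forall>i\<in>{..<n*k}. q * card {..<n*l} \<le> (\<Sum>j\<in>{..<n*l}. A i j)"
    and "\<forall>j\<in>{..<n*l}. q * card {..<n*k} \<le> (\<Sum>i\<in>{..<n*k}. A i j)"
proof -
  have "q * (n * l) \<le> m * l" "q * (n * k) \<le> m * k"
    using assms(2) by (simp_all add: mult.assoc[symmetric] mult_le_mono1)
  then show "\<forall>i\<in>{..<n*k}. q * card {..<n*l} \<le> (\<Sum>j\<in>{..<n*l}. A i j)"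
    and "\<forall>j\<in>{..<n*l}. q * card {..<n*k} \<le> (\<Sum>i\<in>{..<n*k}. A i j)"
    using assms(1) by (auto simp: inD_def)
qed

theorem lemma2p5:
  fixes k l n m q :: nat and A :: "nat \<Rightarrow> nat \<Rightarrow> nat" and I J :: "nat set"
  assumes "0 < k" "k \<le> l" "gcd k l = 1" "1 \<le> n"
    and "q = m div n"
    and "inD k l m n A"
    and "I \<subseteq> {..<n*k}" "J \<subseteq> {..<n*l}"
    and "\<forall>i\<in>I. \<forall>j\<in>J. A i j \<le> q"
    and "\<forall>I' J'. I' \<subseteq> {..<n*k} \<and> J' \<subseteq> {..<n*l} \<and> (\<forall>i\<in>I'. \<forall>j\<in>J'. A i j \<le> q)
               \<longrightarrow> card I' + card J' \<le> card I + card J"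
    and "(n*k - card I) + (n*l - card J) \<le> n*k"
  shows "tdet A {..<n*k} {..<n*l} \<ge>
           min (n*k*(q+1))
               (tdet A ({..<n*k} - I) J + tdet A I ({..<n*l} - J)
                + (n*k - (n*k - card I) - (n*l - card J)) * q)"
proof -
  let ?N = "n*k" and ?M = "n*l"
  have finIJ: "finite I" "finite J" using assms(7,8) finite_subset by auto
  have cards: "card ({..<?N} - I) = ?N - card I" "card ({..<?M} - J) = ?M - card J"
    using assms(7,8) finIJ by (simp_all add: card_Diff_subset)
  have "card J \<le> ?M" "?N \<le> ?M"
    using assms(2,8) card_mono[of "{..<?M}" J] by auto
  then have "card ({..<?N} - I) \<le> card J" "card ({..<?M} - J) \<le> card I"
    unfolding cards using assms(11) by linarith+
  then obtain R f where pt: "partial_transversal {..<?N} {..<?M} R f"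
      and "card R = (?N - card I) + (?M - card J)"
      and "(\<Sum>i\<in>R. A i (f i)) = tdet A ({..<?N} - I) J + tdet A I ({..<?M} - J)"
    using transversal_of_off_diagonal_blocks[of "{..<?N}" "{..<?M}" I J A] assms(7,8)
    unfolding cards by auto
  moreover have "q * n \<le> m" using assms(5) by (simp add: div_times_less_eq_dividend)
  ultimately show ?thesis
    using tdet_ge_min_shifted[OF _ _ _ inD_line_sums_ge[OF assms(6)] pt] assms(2)
    by (simp add: diff_diff_add)
qed

end
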